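(* Let $H \in \mathcal{M}_n(\mathbb{R})$ be a (real) positive semidefinite matrix whose least eigenvalue is simple. Then $H$ has exactly $k$ distinct eigenvalues, where $2 \le k \le n$, if and only if there are $k$ distinct real numbers $\mu_1, \ldots, \mu_k$ such that (i) $H - \mu_i I$ is a singular matrix for every $1 \le i \le k-1$; and (ii) $\prod_{i=1}^{k-1}(H - \mu_i I) = \frac{\prod_{i=1}^{k-1}(\mu_k - \mu_i)}{\|\alpha\|^2}\,\alpha\alpha^T$ and $H\alpha = \mu_k\alpha$ for some $\alpha \in \mathbb{R}^n\setminus\{\mathbf{0}\}$. Moreover, in this case $\mu_1, \ldots, \mu_k$ are exactly the $k$ distinct eigenvalues of $H$.
   Context: $I$ is the identity matrix and $\|\alpha\|^2 = \alpha^T\alpha$ is the squared Euclidean norm. A simple eigenvalue is one of algebraic multiplicity $1$. *)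

theory Defs
  imports "Jordan_Normal_Form.Jordan_Normal_Form"
begin

definition psd_mat :: "nat \<Rightarrow> real mat \<Rightarrow> bool" where
  "psd_mat n H \<longleftrightarrow> H \<in> carrier_mat n n \<and> H\<^sup>T = H \<and>
     (\<forall>x \<in> carrier_vec n. 0 \<le> x \<bullet> (H *\<^sub>v x))"

definition least_eigenvalue_simple :: "real mat \<Rightarrow> bool" where
  "least_eigenvalue_simple H \<longleftrightarrow>
     (\<exists>l. eigenvalue H l \<and> (\<forall>m. eigenvalue H m \<longrightarrow> l \<le> m) \<and>
          Polynomial.order l (char_poly H) = 1)"

fun mat_prod_upto :: "nat \<Rightarrow> (nat \<Rightarrow> real mat) \<Rightarrow> nat \<Rightarrow> real mat" where
  "mat_prod_upto n f 0 = 1\<^sub>m n"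
| "mat_prod_upto n f (Suc m) = mat_prod_upto n f m * f (Suc m)"

definition outer_self :: "real vec \<Rightarrow> real mat" where
  "outer_self a = mat (dim_vec a) (dim_vec a) (\<lambda>(i, j). a $ i * a $ j)"

end

theory Submission
  imports Defs Jordan_Normal_Form.Jordan_Normal_Form_Uniqueness Jordan_Normal_Form.Jordan_Normal_Form_Existence
begin

text \<open>If \<open>P \<mu>\<close> holds, every \<open>\<mu> i\<close> is an eigenvalue, and an eigenvector \<open>v\<close> for an eigenvalue
  \<open>x\<close> outside the \<open>\<mu> i\<close> is mapped by the product to \<open>(\<Prod>i. x - \<mu> i) v \<noteq> 0\<close>, which lies on the
  line of \<open>\<alpha>\<close>; hence \<open>x = \<mu> k\<close> and the \<open>\<mu> i\<close> are exactly the eigenvalues.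
  Conversely, a real symmetric \<open>H\<close> is diagonalisable, \<open>H = P D P\<^sup>-\<^sup>1\<close>. Taking for \<open>\<mu> k\<close> the
  simple eigenvalue \<open>\<lambda>\<close> and for the other \<open>\<mu> i\<close> the remaining eigenvalues, the product becomes
  \<open>P E P\<^sup>-\<^sup>1\<close> with \<open>E\<close> diagonal and zero except at the single position of \<open>\<lambda>\<close>; by symmetry
  this rank-one matrix is \<open>c / \<parallel>u\<parallel>\<^sup>2 \<cdot> u u\<^sup>T\<close> for the \<open>\<lambda>\<close>-eigenvector \<open>u\<close>.\<close>

lemma invertible_mat_iff_det_nonzero:
  assumes A: "(A :: 'a :: field mat) \<in> carrier_mat n n"
  shows "invertible_mat A \<longleftrightarrow> det A \<noteq> 0"
proof
  assume "invertible_mat A"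
  then obtain B where BA: "B * A = 1\<^sub>m (dim_row B)" and AB: "A * B = 1\<^sub>m (dim_row A)"
    unfolding invertible_mat_def inverts_mat_def by auto
  have "B \<in> carrier_mat n n"
    using arg_cong[OF BA, of dim_col] arg_cong[OF AB, of dim_col] A by auto
  with A AB BA show "det A \<noteq> 0"
    by (intro unit_imp_det_non_zero[of _ n "()"]) (auto simp: Units_def ring_mat_def)
next
  assume "det A \<noteq> 0"
  from det_non_zero_imp_unit[OF A this, of "()"] A show "invertible_mat A"
    unfolding Units_def ring_mat_def invertible_mat_def inverts_mat_def by auto
qed

lemma char_matrix_eq_shift:
  assumes "(A :: 'a :: field mat) \<in> carrier_mat n n"
  shows "char_matrix A e = A - e \<cdot>\<^sub>m 1\<^sub>m n"
  using assms unfolding char_matrix_def by (intro eq_matI) auto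

lemma eigenvalue_iff_not_invertible_shift:
  assumes A: "(A :: 'a :: field mat) \<in> carrier_mat n n"
  shows "eigenvalue A e \<longleftrightarrow> \<not> invertible_mat (A - e \<cdot>\<^sub>m 1\<^sub>m n)"
proof -
  have "A - e \<cdot>\<^sub>m 1\<^sub>m n \<in> carrier_mat n n" using A by auto
  then show ?thesis
    by (simp add: eigenvalue_det[OF A] char_matrix_eq_shift[OF A] invertible_mat_iff_det_nonzero)
qed

lemma smult_mat_mult_vec:
  assumes "(A :: 'a :: comm_semiring_1 mat) \<in> carrier_mat nr nc" "v \<in> carrier_vec nc"
  shows "(c \<cdot>\<^sub>m A) *\<^sub>v v = c \<cdot>\<^sub>v (A *\<^sub>v v)"
  using assms by (intro eq_vecI) (auto simp: scalar_prod_def sum_distrib_left mult_ac)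

lemma shift_mult_vec:
  assumes "(A :: 'a :: comm_ring_1 mat) \<in> carrier_mat n n" "v \<in> carrier_vec n"
  shows "(A - c \<cdot>\<^sub>m 1\<^sub>m n) *\<^sub>v v = A *\<^sub>v v - c \<cdot>\<^sub>v v"
  using assms by (simp add: minus_mult_distrib_mat_vec[of _ n n] smult_mat_mult_vec[of _ n n])

lemma mat_prod_upto_carrier:
  assumes "\<And>i. f i \<in> carrier_mat n n"
  shows "mat_prod_upto n f m \<in> carrier_mat n n"
  by (induct m) (use assms in auto)

lemma mat_prod_upto_shift_mult_eigenvector:
  assumes H: "H \<in> carrier_mat n n" and v: "v \<in> carrier_vec n" and Hv: "H *\<^sub>v v = x \<cdot>\<^sub>v v"
  shows "mat_prod_upto n (\<lambda>i. H - \<mu> i \<cdot>\<^sub>m 1\<^sub>m n) m *\<^sub>v v = (\<Prod>i = 1..m. x - \<mu> i) \<cdot>\<^sub>v v"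
proof (induct m)
  case (Suc m)
  let ?Q = "mat_prod_upto n (\<lambda>i. H - \<mu> i \<cdot>\<^sub>m 1\<^sub>m n) m"
  have Q: "?Q \<in> carrier_mat n n" by (rule mat_prod_upto_carrier) (use H in auto)
  have "mat_prod_upto n (\<lambda>i. H - \<mu> i \<cdot>\<^sub>m 1\<^sub>m n) (Suc m) *\<^sub>v v
      = ?Q *\<^sub>v ((H - \<mu> (Suc m) \<cdot>\<^sub>m 1\<^sub>m n) *\<^sub>v v)"
    unfolding mat_prod_upto.simps by (rule assoc_mult_mat_vec[OF Q _ v]) (use H in auto)
  also have "(H - \<mu> (Suc m) \<cdot>\<^sub>m 1\<^sub>m n) *\<^sub>v v = (x - \<mu> (Suc m)) \<cdot>\<^sub>v v"
    using H v Hv by (intro eq_vecI) (auto simp: shift_mult_vec algebra_simps)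
  finally have "mat_prod_upto n (\<lambda>i. H - \<mu> i \<cdot>\<^sub>m 1\<^sub>m n) (Suc m) *\<^sub>v v
      = (x - \<mu> (Suc m)) \<cdot>\<^sub>v (?Q *\<^sub>v v)"
    using Q v by (simp add: mult_mat_vec)
  then show ?case
    using Suc v by (simp add: prod.nat_ivl_Suc' smult_smult_assoc mult.commute)
qed (use v in simp)

lemma outer_self_mult_vec:
  assumes "\<alpha> \<in> carrier_vec n" "v \<in> carrier_vec n"
  shows "outer_self \<alpha> *\<^sub>v v = (\<alpha> \<bullet> v) \<cdot>\<^sub>v \<alpha>"
  using assms unfolding outer_self_def
  by (intro eq_vecI) (auto simp: scalar_prod_def sum_distrib_left sum_distrib_right mult_ac)

lemma outer_self_carrier: "\<alpha> \<in> carrier_vec n \<Longrightarrow> outer_self \<alpha> \<in> carrier_mat n n"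
  unfolding outer_self_def by auto

lemma smult_vec_right_cancel:
  assumes "(w :: 'a :: field vec) \<in> carrier_vec n" "w \<noteq> 0\<^sub>v n" "a \<cdot>\<^sub>v w = b \<cdot>\<^sub>v w"
  shows "a = b"
proof -
  obtain i where i: "i < n" "w $ i \<noteq> 0"
    using assms(1,2) by (metis carrier_vecD eq_vecI index_zero_vec)
  from arg_cong[OF assms(3), of "\<lambda>x. x $ i"] i assms(1) show ?thesis by auto
qed

lemma eigenvalues_eq_image_if_shifted_product_rank_one:
  fixes H :: "real mat" and \<mu> :: "nat \<Rightarrow> real"
  assumes H: "H \<in> carrier_mat n n" and "1 \<le> k"
    and singular: "\<forall>i \<in> {1..k-1}. \<not> invertible_mat (H - \<mu> i \<cdot>\<^sub>m 1\<^sub>m n)"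
    and \<alpha>: "\<alpha> \<in> carrier_vec n" "\<alpha> \<noteq> 0\<^sub>v n" and H\<alpha>: "H *\<^sub>v \<alpha> = \<mu> k \<cdot>\<^sub>v \<alpha>"
    and prod: "mat_prod_upto n (\<lambda>i. H - \<mu> i \<cdot>\<^sub>m 1\<^sub>m n) (k - 1) = c \<cdot>\<^sub>m outer_self \<alpha>"
  shows "\<mu> ` {1..k} = {x. eigenvalue H x}"
proof (intro equalityI subsetI)
  fix y assume "y \<in> \<mu> ` {1..k}"
  then obtain i where i: "i \<in> {1..k}" "y = \<mu> i" by auto
  show "y \<in> {x. eigenvalue H x}"
  proof (cases "i = k")
    case True
    with i \<alpha> H\<alpha> H show ?thesis unfolding eigenvalue_def eigenvector_def by auto
  next
    case False
    with i singular show ?thesis by (auto simp: eigenvalue_iff_not_invertible_shift[OF H])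
  qed
next
  fix x assume "x \<in> {x. eigenvalue H x}"
  then obtain v where v: "v \<in> carrier_vec n" "v \<noteq> 0\<^sub>v n" and Hv: "H *\<^sub>v v = x \<cdot>\<^sub>v v"
    using H unfolding eigenvalue_def eigenvector_def by auto
  show "x \<in> \<mu> ` {1..k}"
  proof (rule ccontr)
    assume x: "x \<notin> \<mu> ` {1..k}"
    define p where "p = (\<Prod>i = 1..k-1. x - \<mu> i)"
    have "p \<noteq> 0" using x unfolding p_def by (auto simp: prod_zero_iff)
    have "p \<cdot>\<^sub>v v = (c \<cdot>\<^sub>m outer_self \<alpha>) *\<^sub>v v"
      unfolding p_def prod[symmetric] by (rule mat_prod_upto_shift_mult_eigenvector[OF H v(1) Hv, symmetric])
    also have "\<dots> = (c * (\<alpha> \<bullet> v)) \<cdot>\<^sub>v \<alpha>"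
      using \<alpha> v by (simp add: smult_mat_mult_vec[OF outer_self_carrier] outer_self_mult_vec smult_smult_assoc)
    finally have pv: "p \<cdot>\<^sub>v v = (c * (\<alpha> \<bullet> v)) \<cdot>\<^sub>v \<alpha>" .
    have "(x * p) \<cdot>\<^sub>v v = H *\<^sub>v (p \<cdot>\<^sub>v v)"
      using H v Hv by (simp add: mult_mat_vec smult_smult_assoc mult.commute)
    also have "\<dots> = \<mu> k \<cdot>\<^sub>v (p \<cdot>\<^sub>v v)"
      unfolding pv using H \<alpha> H\<alpha> by (simp add: mult_mat_vec smult_smult_assoc mult.commute)
    also have "\<dots> = (\<mu> k * p) \<cdot>\<^sub>v v" by (simp add: smult_smult_assoc)
    finally have "x * p = \<mu> k * p" by (rule smult_vec_right_cancel[OF v])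
    with \<open>p \<noteq> 0\<close> \<open>1 \<le> k\<close> x show False by auto
  qed
qed

interpretation of_real_poly_hom: map_poly_inj_comm_ring_hom "of_real :: real \<Rightarrow> complex" ..

lemma complex_eigenvalue_real_if_symmetric:
  fixes H :: "real mat"
  assumes H: "H \<in> carrier_mat n n" and sym: "H\<^sup>T = H"
    and ev: "eigenvalue (map_mat complex_of_real H) a"
  shows "cnj a = a"
proof -
  let ?Hc = "map_mat complex_of_real H"
  have Hc: "?Hc \<in> carrier_mat n n" using H by simp
  obtain v where v: "v \<in> carrier_vec n" "v \<noteq> 0\<^sub>v n" and Hv: "?Hc *\<^sub>v v = a \<cdot>\<^sub>v v"
    using ev Hc unfolding eigenvalue_def eigenvector_def by auto
  have conj_Hv: "?Hc *\<^sub>v conjugate v = conjugate (?Hc *\<^sub>v v)"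
  proof (rule eq_vecI)
    fix i assume "i < dim_vec (conjugate (?Hc *\<^sub>v v))"
    then have i: "i < n" using H by simp
    have "conjugate (row ?Hc i) = row ?Hc i" using i H by (intro eq_vecI) auto
    then have "conjugate (row ?Hc i \<bullet> v) = row ?Hc i \<bullet> conjugate v"
      using conjugate_sprod_vec[of "row ?Hc i" n v] i H v by simp
    then show "(?Hc *\<^sub>v conjugate v) $ i = conjugate (?Hc *\<^sub>v v) $ i"
      using i H by simp
  qed (use H in simp)
  have "a * (conjugate v \<bullet> v) = conjugate v \<bullet> (?Hc *\<^sub>v v)"
    using v by (simp add: Hv scalar_prod_smult_right)
  also have "\<dots> = (?Hc\<^sup>T *\<^sub>v conjugate v) \<bullet> v"
    using Hc v by (simp add: transpose_vec_mult_scalar)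
  also have "\<dots> = cnj a * (conjugate v \<bullet> v)"
    using sym v by (simp add: map_mat_transpose conj_Hv Hv conjugate_smult_vec scalar_prod_smult_left)
  finally have "a * (conjugate v \<bullet> v) = cnj a * (conjugate v \<bullet> v)" .
  moreover have "conjugate v \<bullet> v \<noteq> 0"
    using v conjugate_vec_sprod_comm[of v n v] conjugate_square_eq_0_vec[of v n] by simp
  ultimately show ?thesis by simp
qed

lemma char_poly_splits_if_symmetric:
  fixes H :: "real mat"
  assumes H: "H \<in> carrier_mat n n" and sym: "H\<^sup>T = H"
  obtains es where "char_poly H = (\<Prod>e\<leftarrow>es. [:-e, 1:])"
proof -
  let ?Hc = "map_mat complex_of_real H"
  have Hc: "?Hc \<in> carrier_mat n n" using H by simp
  obtain as where as: "char_poly ?Hc = (\<Prod>a\<leftarrow>as. [:-a, 1:])"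
    using char_poly_factorized[OF Hc] by auto
  have real: "of_real (Re a) = a" if "a \<in> set as" for a
  proof -
    have "poly (char_poly ?Hc) a = 0"
      using that unfolding as by (simp add: poly_prod_list prod_list_zero_iff)
    then have "cnj a = a"
      using complex_eigenvalue_real_if_symmetric[OF H sym] eigenvalue_root_char_poly[OF Hc] by simp
    then show ?thesis by (metis Reals_cnj_iff Reals_cases Re_complex_of_real)
  qed
  have "map_poly of_real (\<Prod>e\<leftarrow>map Re as. [:-e, 1:]) = (\<Prod>a\<leftarrow>as. [:-a, 1:])"
    unfolding of_real_poly_hom.hom_prod_list map_map o_def
    by (intro arg_cong[where f = prod_list] map_idI) (simp add: real)
  also have "\<dots> = map_poly of_real (char_poly H)"
    unfolding as[symmetric] by (rule of_real_hom.char_poly_hom[OF H])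
  finally show ?thesis using that of_real_poly_hom.injectivity by metis
qed

lemma symmetric_mult_self_kernel:
  fixes C :: "real mat"
  assumes C: "C \<in> carrier_mat n n" and sym: "C\<^sup>T = C"
    and v: "v \<in> carrier_vec n" and CCv: "(C * C) *\<^sub>v v = 0\<^sub>v n"
  shows "C *\<^sub>v v = 0\<^sub>v n"
proof -
  let ?w = "C *\<^sub>v v"
  have w: "?w \<in> carrier_vec n" using C v by simp
  have "?w \<bullet> ?w = (C\<^sup>T *\<^sub>v v) \<bullet> ?w" using sym by simp
  also have "\<dots> = v \<bullet> ((C * C) *\<^sub>v v)" using transpose_vec_mult_scalar[OF C w v] C v by simp
  also have "\<dots> = 0" using CCv v by simp
  finally show ?thesis using conjugate_square_eq_0_vec[OF w] by simp
qed

lemma dim_gen_eigenspace_2_eq_1_if_symmetric: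
  fixes H :: "real mat"
  assumes H: "H \<in> carrier_mat n n" and sym: "H\<^sup>T = H"
  shows "dim_gen_eigenspace H e 2 = dim_gen_eigenspace H e 1"
proof -
  let ?C = "char_matrix H e"
  have C: "?C \<in> carrier_mat n n" using H by simp
  have "?C\<^sup>T = ?C"
  proof -
    have "(e \<cdot>\<^sub>m 1\<^sub>m n)\<^sup>T = (e \<cdot>\<^sub>m 1\<^sub>m n :: real mat)" by (intro eq_matI) auto
    then show ?thesis using H sym by (simp add: char_matrix_eq_shift transpose_minus[of _ n n])
  qed
  have "mat_kernel (?C ^\<^sub>m 2) = mat_kernel (?C ^\<^sub>m 1)"
    using symmetric_mult_self_kernel[OF C \<open>?C\<^sup>T = ?C\<close>] C
    by (auto simp: mat_kernel_def numeral_2_eq_2 assoc_mult_mat_vec[of _ n n _ n])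
  then show ?thesis
    using C unfolding dim_gen_eigenspace_def kernel_dim_def by simp
qed

lemma sum_list_min_2_eq_min_1_imp_le_1:
  fixes xs :: "nat list"
  assumes "sum_list (map (min 2) xs) = sum_list (map (min 1) xs)" and "x \<in> set xs"
  shows "x \<le> 1"
  using assms
proof (induct xs)
  case (Cons a xs)
  have "sum_list (map (min 1) xs) \<le> sum_list (map (min 2) xs)"
    by (induct xs) auto
  with Cons.prems(1) have "min 2 a = min 1 a"
    and "sum_list (map (min 2) xs) = sum_list (map (min 1) xs)" by auto
  with Cons show ?case by (cases "x = a") auto
qed simp

lemma jordan_matrix_size_one_blocks:
  "jordan_matrix (map (\<lambda>e. (1, e)) es) = mat_diag (length es) (\<lambda>i. es ! i)"
proof (induct es)
  case (Cons a es)
  have "sum_list (map fst (map (\<lambda>e. (1 :: nat, e)) es)) = length es"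
    by (induct es) auto
  then show ?case
    unfolding list.map jordan_matrix_Cons Cons mat_diag_def by (intro eq_matI) (auto simp: nth_Cons')
qed (auto simp: jordan_matrix_def mat_diag_def)

text \<open>The Jordan form exists because the characteristic polynomial splits over the reals, and
  its blocks have size one because \<open>ker (H - e I)\<^sup>2 = ker (H - e I)\<close>.\<close>
lemma real_symmetric_diagonalizable:
  fixes H :: "real mat"
  assumes H: "H \<in> carrier_mat n n" and sym: "H\<^sup>T = H"
  obtains P R d where "P \<in> carrier_mat n n" "R \<in> carrier_mat n n" "P * R = 1\<^sub>m n" "R * P = 1\<^sub>m n"
    "H = P * mat_diag n d * R" "\<forall>x. Polynomial.order x (char_poly H) = card {j. j < n \<and> d j = x}"
proof -
  obtain es where "char_poly H = (\<Prod>e\<leftarrow>es. [:-e, 1:])"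
    by (rule char_poly_splits_if_symmetric[OF H sym])
  then obtain n_as where jnf: "jordan_nf H n_as" using jordan_nf_exists[OF H] by blast
  have size_one: "s = 1" if "(s, e) \<in> set n_as" for s e
  proof -
    have "sum_list (map (min 2) (map fst (filter (\<lambda>(n, e'). e' = e) n_as)))
        = sum_list (map (min 1) (map fst (filter (\<lambda>(n, e'). e' = e) n_as)))"
      using dim_gen_eigenspace_2_eq_1_if_symmetric[OF H sym, of e]
      unfolding dim_gen_eigenspace[OF jnf] .
    moreover have "s \<in> set (map fst (filter (\<lambda>(n, e'). e' = e) n_as))" using that by force
    moreover have "s \<noteq> 0" using jnf that unfolding jordan_nf_def by force
    ultimately show ?thesis using sum_list_min_2_eq_min_1_imp_le_1 by fastforce
  qed
  define ds where "ds = map snd n_as"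
  have "map (\<lambda>b. (1, snd b)) n_as = n_as"
    using size_one by (intro map_idI) (metis prod.collapse)
  then have n_as: "n_as = map (\<lambda>e. (1, e)) ds" unfolding ds_def map_map o_def by simp
  have "similar_mat H (mat_diag (length ds) (\<lambda>i. ds ! i))"
    using jnf unfolding jordan_nf_def n_as jordan_matrix_size_one_blocks by simp
  then obtain m P R where carrier: "{H, mat_diag (length ds) (\<lambda>i. ds ! i), P, R} \<subseteq> carrier_mat m m"
    and PR: "P * R = 1\<^sub>m m" "R * P = 1\<^sub>m m" "H = P * mat_diag (length ds) (\<lambda>i. ds ! i) * R"
    using similar_matD by blast
  have "m = n" using carrier H by auto
  have "mat_diag (length ds) (\<lambda>i. ds ! i) \<in> carrier_mat m m" using carrier by simp
  from carrier_matD(1)[OF this] have "length ds = m" by (simp add: mat_diag_def)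
  have order: "Polynomial.order x (char_poly H) = card {j. j < length ds \<and> ds ! j = x}" for x
  proof -
    have "sum_list (map fst (filter (\<lambda>b. snd b = x) (map (\<lambda>e. (1 :: nat, e)) ds)))
        = length (filter (\<lambda>e. e = x) ds)"
      by (induct ds) auto
    then show ?thesis unfolding jordan_nf_order[OF jnf] n_as length_filter_conv_card .
  qed
  show ?thesis
    by (rule that[of P R "\<lambda>i. ds ! i"])
      (use carrier PR order in \<open>simp_all add: \<open>length ds = m\<close> \<open>m = n\<close>\<close>)
qed

lemma similarity_minus_smult_one:
  assumes P: "P \<in> carrier_mat n n" and R: "R \<in> carrier_mat n n" and D: "D \<in> carrier_mat n n"
    and PR: "P * R = 1\<^sub>m n"
  shows "P * D * R - c \<cdot>\<^sub>m 1\<^sub>m n = P * (D - c \<cdot>\<^sub>m 1\<^sub>m n) * (R :: 'a :: comm_ring_1 mat)"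
proof -
  have "P * (D - c \<cdot>\<^sub>m 1\<^sub>m n) * R = P * D * R - (c \<cdot>\<^sub>m P) * R"
    using P D R by (simp add: mult_minus_distrib_mat[of _ n n] minus_mult_distrib_mat[of _ n n]
        mult_smult_distrib[OF P one_carrier_mat])
  also have "(c \<cdot>\<^sub>m P) * R = c \<cdot>\<^sub>m 1\<^sub>m n"
    using P R PR by (simp add: mult_smult_assoc_mat[of _ n n])
  finally show ?thesis by simp
qed

lemma similarity_mult:
  assumes P: "P \<in> carrier_mat n n" and R: "R \<in> carrier_mat n n"
    and M: "M \<in> carrier_mat n n" and N: "N \<in> carrier_mat n n" and RP: "R * P = 1\<^sub>m n"
  shows "(P * M * R) * (P * N * R) = P * (M * N) * (R :: 'a :: semiring_1 mat)"
proof -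
  have "(P * M * R) * (P * N * R) = P * M * (R * P) * N * R"
    using P M R N by (simp add: assoc_mult_mat[of _ n n _ n _ n])
  also have "\<dots> = P * (M * N) * R" using RP P M N R by (simp add: assoc_mult_mat[of _ n n _ n _ n])
  finally show ?thesis .
qed

lemma mat_prod_upto_shift_similar:
  assumes P: "P \<in> carrier_mat n n" and R: "R \<in> carrier_mat n n" and D: "D \<in> carrier_mat n n"
    and PR: "P * R = 1\<^sub>m n" and RP: "R * P = 1\<^sub>m n"
  shows "mat_prod_upto n (\<lambda>i. P * D * R - \<mu> i \<cdot>\<^sub>m 1\<^sub>m n) m
    = P * mat_prod_upto n (\<lambda>i. D - \<mu> i \<cdot>\<^sub>m 1\<^sub>m n) m * R"
proof (induct m)
  case (Suc m)
  have "mat_prod_upto n (\<lambda>i. D - \<mu> i \<cdot>\<^sub>m 1\<^sub>m n) m \<in> carrier_mat n n"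
    by (rule mat_prod_upto_carrier) (use D in auto)
  then show ?case
    unfolding mat_prod_upto.simps Suc unfolding similarity_minus_smult_one[OF P R D PR]
    by (rule similarity_mult[OF P R _ _ RP]) (use D in auto)
qed (use P R PR in simp)

lemma mat_prod_upto_shift_mat_diag:
  "mat_prod_upto n (\<lambda>i. mat_diag n d - \<mu> i \<cdot>\<^sub>m 1\<^sub>m n) m = mat_diag n (\<lambda>j. \<Prod>i = 1..m. d j - \<mu> i)"
proof (induct m)
  case (Suc m)
  have "mat_diag n d - \<mu> (Suc m) \<cdot>\<^sub>m 1\<^sub>m n = mat_diag n (\<lambda>j. d j - \<mu> (Suc m))"
    unfolding mat_diag_def by (intro eq_matI) auto
  then show ?case by (simp add: Suc prod.nat_ivl_Suc')
qed simp

lemma mult_mat_diag_single_mult: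
  assumes P: "(P :: 'a :: comm_semiring_1 mat) \<in> carrier_mat nr n" and R: "R \<in> carrier_mat n nc" and j: "j < n"
  shows "P * mat_diag n (\<lambda>i. if i = j then c else 0) * R
    = mat nr nc (\<lambda>(a, b). c * P $$ (a, j) * R $$ (j, b))"
proof (rule eq_matI)
  fix a b assume "a < dim_row (mat nr nc (\<lambda>(a, b). c * P $$ (a, j) * R $$ (j, b)))"
    and "b < dim_col (mat nr nc (\<lambda>(a, b). c * P $$ (a, j) * R $$ (j, b)))"
  then have a: "a < nr" and b: "b < nc" by auto
  have "(P * mat_diag n (\<lambda>i. if i = j then c else 0) * R) $$ (a, b)
      = (\<Sum>i = 0..<n. P $$ (a, i) * (if i = j then c else 0) * R $$ (i, b))"
    using P R a b by (simp add: mat_diag_mult_right[OF P] scalar_prod_def)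
  also have "\<dots> = (\<Sum>i = 0..<n. (if i = j then c * P $$ (a, j) * R $$ (j, b) else 0))"
    by (intro sum.cong) (auto simp: mult_ac)
  also have "\<dots> = c * P $$ (a, j) * R $$ (j, b)" using j by simp
  finally show "(P * mat_diag n (\<lambda>i. if i = j then c else 0) * R) $$ (a, b)
      = mat nr nc (\<lambda>(a, b). c * P $$ (a, j) * R $$ (j, b)) $$ (a, b)" using a b by simp
qed (use P R in auto)

lemma col_eigenvector_if_mult_mat_diag:
  assumes A: "(A :: 'a :: comm_semiring_1 mat) \<in> carrier_mat n n" and M: "M \<in> carrier_mat n n"
    and AM: "A * M = M * mat_diag n d" and j: "j < n"
  shows "A *\<^sub>v col M j = d j \<cdot>\<^sub>v col M j"
proof -
  have "A *\<^sub>v col M j = col (A * M) j" by (rule col_mult2[OF A M j, symmetric])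
  also have "\<dots> = d j \<cdot>\<^sub>v col M j"
    unfolding AM using M j by (intro eq_vecI) (auto simp: mat_diag_mult_right mult.commute)
  finally show ?thesis .
qed

lemma mat_diag_eigenvector_simple:
  assumes x: "(x :: 'a :: idom vec) \<in> carrier_vec n" and Dx: "mat_diag n d *\<^sub>v x = d j \<cdot>\<^sub>v x"
    and simple: "\<And>i. i < n \<Longrightarrow> d i = d j \<Longrightarrow> i = j"
  shows "x = x $ j \<cdot>\<^sub>v unit_vec n (j :: nat)"
proof (rule eq_vecI)
  fix i assume "i < dim_vec (x $ j \<cdot>\<^sub>v unit_vec n j)"
  then have i: "i < n" by simp
  have "(mat_diag n d *\<^sub>v x) $ i = (\<Sum>t = 0..<n. (if i = t then d t else 0) * x $ t)"
    using i x by (simp add: mat_diag_def scalar_prod_def)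
  also have "\<dots> = (\<Sum>t = 0..<n. if t = i then d i * x $ i else 0)"
    by (intro sum.cong) auto
  finally have "(mat_diag n d *\<^sub>v x) $ i = d i * x $ i" using i by simp
  then have "d i * x $ i = d j * x $ i" using arg_cong[OF Dx, of "\<lambda>v. v $ i"] i x by auto
  then show "x $ i = (x $ j \<cdot>\<^sub>v unit_vec n j) $ i"
    using simple[OF i] i by (cases "i = j") (auto simp: unit_vec_def)
qed (use x in simp)

text \<open>\<open>R H = D R\<close> makes row \<open>j\<close> of \<open>R = P\<^sup>-\<^sup>1\<close> a left, hence by symmetry a right, eigenvector
  for the simple eigenvalue \<open>d j\<close>, so it is a multiple of column \<open>j\<close> of \<open>P\<close>; the factor is fixed
  by \<open>row R j \<bullet> col P j = 1\<close>.\<close>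
lemma symmetric_diagonalization_simple_eigenvector:
  fixes H P R :: "real mat"
  assumes H: "H \<in> carrier_mat n n" and sym: "H\<^sup>T = H"
    and P: "P \<in> carrier_mat n n" and R: "R \<in> carrier_mat n n"
    and PR: "P * R = 1\<^sub>m n" and RP: "R * P = 1\<^sub>m n" and HPR: "H = P * mat_diag n d * R"
    and j: "j < n" and simple: "\<And>i. i < n \<Longrightarrow> d i = d j \<Longrightarrow> i = j"
  shows "H *\<^sub>v col P j = d j \<cdot>\<^sub>v col P j"
    and "col P j \<bullet> col P j \<noteq> 0"
    and "row R j = (1 / (col P j \<bullet> col P j)) \<cdot>\<^sub>v col P j"
proof -
  let ?D = "mat_diag n d" and ?u = "col P j" and ?r = "row R j"
  have D: "?D \<in> carrier_mat n n" by simp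
  have "H * P = P * ?D * (R * P)"
    unfolding HPR by (rule assoc_mult_mat[of _ n n]) (use P R in auto)
  then have HP: "H * P = P * ?D" using RP P D by simp
  have "R * H = (R * P) * ?D * R"
    unfolding HPR using P R D by (simp add: assoc_mult_mat[of _ n n _ n _ n])
  then have RH: "R * H = ?D * R" using RP R D by simp
  show "H *\<^sub>v ?u = d j \<cdot>\<^sub>v ?u" by (rule col_eigenvector_if_mult_mat_diag[OF H P HP j])
  have "H * R\<^sup>T = (R * H)\<^sup>T" using H R sym by (simp add: transpose_mult[of R n n H n])
  also have "\<dots> = R\<^sup>T * ?D\<^sup>T" unfolding RH using R by (simp add: transpose_mult[of _ n n R n])
  also have "?D\<^sup>T = ?D" unfolding mat_diag_def by (intro eq_matI) auto
  finally have "H *\<^sub>v col R\<^sup>T j = d j \<cdot>\<^sub>v col R\<^sup>T j"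
    using col_eigenvector_if_mult_mat_diag[OF H _ _ j] R by simp
  then have Hr: "H *\<^sub>v ?r = d j \<cdot>\<^sub>v ?r" using R j by simp
  define x where "x = R *\<^sub>v ?r"
  have r_carrier: "?r \<in> carrier_vec n" using row_carrier[of R j] R by simp
  have x: "x \<in> carrier_vec n" unfolding x_def using R r_carrier by (rule mult_mat_vec_carrier)
  have "?D *\<^sub>v x = (?D * R) *\<^sub>v ?r" unfolding x_def by (rule assoc_mult_mat_vec[symmetric, OF D R r_carrier])
  also have "?D * R = R * H" by (rule RH[symmetric])
  also have "(R * H) *\<^sub>v ?r = R *\<^sub>v (H *\<^sub>v ?r)" by (rule assoc_mult_mat_vec[OF R H r_carrier])
  also have "\<dots> = d j \<cdot>\<^sub>v x" unfolding Hr x_def by (rule mult_mat_vec[OF R r_carrier])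
  finally have x_unit: "x = x $ j \<cdot>\<^sub>v unit_vec n j"
    by (rule mat_diag_eigenvector_simple[OF x _ simple])
  have "?r = (P * R) *\<^sub>v ?r" using PR R j by simp
  also have "\<dots> = P *\<^sub>v x" unfolding x_def using P R j by simp
  also have "\<dots> = P *\<^sub>v (x $ j \<cdot>\<^sub>v unit_vec n j)" using x_unit by (rule arg_cong)
  also have "\<dots> = x $ j \<cdot>\<^sub>v (P *\<^sub>v unit_vec n j)" using P by (simp add: mult_mat_vec)
  also have "P *\<^sub>v unit_vec n j = ?u" using col_mult2[OF P one_carrier_mat j] P j by simp
  finally have r: "?r = x $ j \<cdot>\<^sub>v ?u" .
  have "?r \<bullet> ?u = 1" using arg_cong[OF RP, of "\<lambda>M. M $$ (j, j)"] R P j by simp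
  then have "x $ j * (?u \<bullet> ?u) = 1" unfolding r using P j by simp
  then have "?u \<bullet> ?u \<noteq> 0" and xj: "x $ j = 1 / (?u \<bullet> ?u)" by (auto simp: eq_divide_eq)
  then show "?u \<bullet> ?u \<noteq> 0" and "?r = (1 / (?u \<bullet> ?u)) \<cdot>\<^sub>v ?u" unfolding r xj by auto
qed

lemma shifted_product_rank_one_if_simple_eigenvalue:
  fixes H :: "real mat" and \<mu> :: "nat \<Rightarrow> real"
  assumes H: "H \<in> carrier_mat n n" and sym: "H\<^sup>T = H"
    and simple: "Polynomial.order l (char_poly H) = 1"
    and others: "{x. eigenvalue H x} - {l} \<subseteq> \<mu> ` {1..m}"
  obtains \<alpha> where "\<alpha> \<in> carrier_vec n" "\<alpha> \<noteq> 0\<^sub>v n" "H *\<^sub>v \<alpha> = l \<cdot>\<^sub>v \<alpha>"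
    "mat_prod_upto n (\<lambda>i. H - \<mu> i \<cdot>\<^sub>m 1\<^sub>m n) m
      = ((\<Prod>i = 1..m. l - \<mu> i) / (\<alpha> \<bullet> \<alpha>)) \<cdot>\<^sub>m outer_self \<alpha>"
proof -
  obtain P R d where P: "P \<in> carrier_mat n n" and R: "R \<in> carrier_mat n n"
    and PR: "P * R = 1\<^sub>m n" and RP: "R * P = 1\<^sub>m n" and HPR: "H = P * mat_diag n d * R"
    and order: "\<forall>x. Polynomial.order x (char_poly H) = card {j. j < n \<and> d j = x}"
    by (rule real_symmetric_diagonalizable[OF H sym])
  have "card {i. i < n \<and> d i = l} = 1" using simple order[rule_format, of l] by simp
  then obtain j where j_set: "{i. i < n \<and> d i = l} = {j}" by (rule card_1_singletonE)
  then have j: "j < n" "d j = l" by blast+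
  have j_simple: "i = j" if "i < n" "d i = d j" for i using that j j_set by blast
  let ?u = "col P j"
  note u = symmetric_diagonalization_simple_eigenvector[OF H sym P R PR RP HPR j(1) j_simple]
  have eigenvalue_d: "eigenvalue H (d i)" if "i < n" for i
  proof -
    have "Polynomial.order (d i) (char_poly H) \<noteq> 0" using order[rule_format, of "d i"] that by auto
    then show ?thesis by (simp add: eigenvalue_root_char_poly[OF H] order_root)
  qed
  define c where "c = (\<Prod>i = 1..m. l - \<mu> i)"
  have "mat_prod_upto n (\<lambda>i. H - \<mu> i \<cdot>\<^sub>m 1\<^sub>m n) m = P * mat_diag n (\<lambda>k. \<Prod>i = 1..m. d k - \<mu> i) * R"
    unfolding HPR mat_prod_upto_shift_similar[OF P R mat_diag_dim PR RP] mat_prod_upto_shift_mat_diag ..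
  also have "mat_diag n (\<lambda>k. \<Prod>i = 1..m. d k - \<mu> i) = mat_diag n (\<lambda>k. if k = j then c else 0)"
  proof -
    have "(\<Prod>i = 1..m. d k - \<mu> i) = 0" if "k < n" "k \<noteq> j" for k
    proof -
      have "d k \<in> \<mu> ` {1..m}" using others eigenvalue_d[OF \<open>k < n\<close>] j_simple that j(2) by blast
      then show ?thesis by (auto simp: prod_zero_iff)
    qed
    then show ?thesis unfolding mat_diag_def c_def using j by (intro eq_matI) auto
  qed
  also have "P * mat_diag n (\<lambda>k. if k = j then c else 0) * R
      = mat n n (\<lambda>(a, b). c * P $$ (a, j) * R $$ (j, b))"
    by (rule mult_mat_diag_single_mult[OF P R j(1)])
  also have "\<dots> = (c / (?u \<bullet> ?u)) \<cdot>\<^sub>m outer_self ?u"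
  proof (rule eq_matI)
    fix a b assume "a < dim_row ((c / (?u \<bullet> ?u)) \<cdot>\<^sub>m outer_self ?u)"
      and "b < dim_col ((c / (?u \<bullet> ?u)) \<cdot>\<^sub>m outer_self ?u)"
    then have a: "a < n" and b: "b < n" using P by (auto simp: outer_self_def)
    have "R $$ (j, b) = P $$ (b, j) / (?u \<bullet> ?u)"
      using arg_cong[OF u(3), of "\<lambda>v. v $ b"] P R j b by simp
    then show "mat n n (\<lambda>(a, b). c * P $$ (a, j) * R $$ (j, b)) $$ (a, b)
        = ((c / (?u \<bullet> ?u)) \<cdot>\<^sub>m outer_self ?u) $$ (a, b)"
      using a b P j by (simp add: outer_self_def)
  qed (use P in \<open>auto simp: outer_self_def\<close>)
  finally have "mat_prod_upto n (\<lambda>i. H - \<mu> i \<cdot>\<^sub>m 1\<^sub>m n) m = (c / (?u \<bullet> ?u)) \<cdot>\<^sub>m outer_self ?u" .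
  moreover have "?u \<noteq> 0\<^sub>v n" using u(2) by auto
  ultimately show ?thesis using that[of ?u] u(1) P j unfolding c_def by simp
qed

lemma ex_bij_betw_atLeastAtMost_last:
  assumes S: "finite S" "card S = k" and a: "a \<in> S"
  obtains f where "bij_betw f {1..k} S" "f k = a"
proof -
  have k: "1 \<le> k" using S a by (auto simp: Suc_le_eq card_gt_0_iff)
  obtain g where g: "bij_betw g {1..k - 1} (S - {a})"
    using ex_bij_betw_nat_finite_1[of "S - {a}"] S a by (auto simp: card_Diff_singleton)
  have "bij_betw (g(k := a)) {1..k - 1} (S - {a})"
    using g by (rule bij_betw_cong[THEN iffD1, rotated]) auto
  moreover have "bij_betw (g(k := a)) {k} {a}" by simp
  ultimately have "bij_betw (g(k := a)) ({1..k - 1} \<union> {k}) ((S - {a}) \<union> {a})"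
    by (rule bij_betw_combine) simp
  moreover have "{1..k - 1} \<union> {k} = {1..k}" "(S - {a}) \<union> {a} = S" using k a by auto
  ultimately show ?thesis using that[of "g(k := a)"] by simp
qed

definition rank_one_certificate :: "nat \<Rightarrow> real mat \<Rightarrow> nat \<Rightarrow> (nat \<Rightarrow> real) \<Rightarrow> bool" where
  "rank_one_certificate n H k \<mu> \<longleftrightarrow>
     inj_on \<mu> {1..k} \<and>
     (\<forall>i \<in> {1..k - 1}. \<not> invertible_mat (H - \<mu> i \<cdot>\<^sub>m 1\<^sub>m n)) \<and>
     (\<exists>\<alpha> \<in> carrier_vec n. \<alpha> \<noteq> 0\<^sub>v n \<and>
        mat_prod_upto n (\<lambda>i. H - \<mu> i \<cdot>\<^sub>m 1\<^sub>m n) (k - 1) =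
          ((\<Prod>i = 1..k - 1. \<mu> k - \<mu> i) / (\<alpha> \<bullet> \<alpha>)) \<cdot>\<^sub>m outer_self \<alpha> \<and>
        H *\<^sub>v \<alpha> = \<mu> k \<cdot>\<^sub>v \<alpha>)"

lemma rank_one_certificate_spectrum:
  assumes H: "H \<in> carrier_mat n n" and k: "1 \<le> k" and cert: "rank_one_certificate n H k \<mu>"
  shows "\<mu> ` {1..k} = {x. eigenvalue H x}"
proof -
  from cert obtain \<alpha> where singular: "\<forall>i \<in> {1..k - 1}. \<not> invertible_mat (H - \<mu> i \<cdot>\<^sub>m 1\<^sub>m n)"
    and \<alpha>: "\<alpha> \<in> carrier_vec n" "\<alpha> \<noteq> 0\<^sub>v n" "H *\<^sub>v \<alpha> = \<mu> k \<cdot>\<^sub>v \<alpha>"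
    and prod: "mat_prod_upto n (\<lambda>i. H - \<mu> i \<cdot>\<^sub>m 1\<^sub>m n) (k - 1)
      = ((\<Prod>i = 1..k - 1. \<mu> k - \<mu> i) / (\<alpha> \<bullet> \<alpha>)) \<cdot>\<^sub>m outer_self \<alpha>"
    unfolding rank_one_certificate_def by blast
  show ?thesis by (rule eigenvalues_eq_image_if_shifted_product_rank_one[OF H k singular \<alpha> prod])
qed

lemma card_eigenvalues_if_rank_one_certificate:
  assumes H: "H \<in> carrier_mat n n" and k: "1 \<le> k" and cert: "rank_one_certificate n H k \<mu>"
  shows "card {x. eigenvalue H x} = k"
proof -
  have "inj_on \<mu> {1..k}" using cert unfolding rank_one_certificate_def by blast
  then show ?thesis
    unfolding rank_one_certificate_spectrum[OF H k cert, symmetric] by (simp add: card_image)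
qed

lemma rank_one_certificate_exists:
  fixes H :: "real mat"
  assumes H: "H \<in> carrier_mat n n" and sym: "H\<^sup>T = H"
    and card: "card {x. eigenvalue H x} = k" and k: "1 \<le> k"
    and l: "eigenvalue H l" and l_simple: "Polynomial.order l (char_poly H) = 1"
  shows "\<exists>\<mu>. rank_one_certificate n H k \<mu>"
proof -
  have "finite {x. eigenvalue H x}" using card k by (intro card_ge_0_finite) auto
  then obtain \<mu> where \<mu>: "bij_betw \<mu> {1..k} {x. eigenvalue H x}" and \<mu>_k: "\<mu> k = l"
    by (rule ex_bij_betw_atLeastAtMost_last[OF _ card]) (use l in simp)
  have eigenvalue_\<mu>: "eigenvalue H (\<mu> i)" if "i \<in> {1..k}" for i
    using \<mu> that by (auto simp: bij_betw_def)
  have "{x. eigenvalue H x} - {l} \<subseteq> \<mu> ` {1..k - 1}"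
  proof
    fix x assume x: "x \<in> {x. eigenvalue H x} - {l}"
    then have "x \<in> \<mu> ` {1..k}" using \<mu> by (simp add: bij_betw_def)
    then obtain i where i: "i \<in> {1..k}" "x = \<mu> i" by blast
    with x \<mu>_k have "i \<noteq> k" by auto
    with i show "x \<in> \<mu> ` {1..k - 1}" by auto
  qed
  then obtain \<alpha> where \<alpha>: "\<alpha> \<in> carrier_vec n" "\<alpha> \<noteq> 0\<^sub>v n" "H *\<^sub>v \<alpha> = \<mu> k \<cdot>\<^sub>v \<alpha>"
    "mat_prod_upto n (\<lambda>i. H - \<mu> i \<cdot>\<^sub>m 1\<^sub>m n) (k - 1)
      = ((\<Prod>i = 1..k - 1. \<mu> k - \<mu> i) / (\<alpha> \<bullet> \<alpha>)) \<cdot>\<^sub>m outer_self \<alpha>"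
    unfolding \<mu>_k by (rule shifted_product_rank_one_if_simple_eigenvalue[OF H sym l_simple])
  have "\<forall>i \<in> {1..k - 1}. \<not> invertible_mat (H - \<mu> i \<cdot>\<^sub>m 1\<^sub>m n)"
    using eigenvalue_\<mu> eigenvalue_iff_not_invertible_shift[OF H] by auto
  with \<alpha> have "rank_one_certificate n H k \<mu>"
    unfolding rank_one_certificate_def using bij_betw_imp_inj_on[OF \<mu>] by blast
  then show ?thesis by blast
qed

theorem corollary4p3:
  fixes n k :: nat and H :: "real mat"
  assumes psd: "psd_mat n H"
    and simple: "least_eigenvalue_simple H"
    and k: "2 \<le> k" "k \<le> n"
  defines "P \<equiv> (\<lambda>\<mu> :: nat \<Rightarrow> real.
              inj_on \<mu> {1..k} \<and>
              (\<forall>i \<in> {1..k-1}. \<not> invertible_mat (H - \<mu> i \<cdot>\<^sub>m 1\<^sub>m n)) \<and>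
              (\<exists>\<alpha> \<in> carrier_vec n. \<alpha> \<noteq> 0\<^sub>v n \<and>
                 mat_prod_upto n (\<lambda>i. H - \<mu> i \<cdot>\<^sub>m 1\<^sub>m n) (k - 1) =
                   ((\<Prod>i = 1..k-1. \<mu> k - \<mu> i) / (\<alpha> \<bullet> \<alpha>)) \<cdot>\<^sub>m outer_self \<alpha> \<and>
                 H *\<^sub>v \<alpha> = \<mu> k \<cdot>\<^sub>v \<alpha>))"
  shows "(card {x. eigenvalue H x} = k \<longleftrightarrow> (\<exists>\<mu>. P \<mu>)) \<and>
         (\<forall>\<mu>. P \<mu> \<longrightarrow> \<mu> ` {1..k} = {x. eigenvalue H x})"
proof -
  have H: "H \<in> carrier_mat n n" and sym: "H\<^sup>T = H" using psd unfolding psd_mat_def by auto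
  obtain l where l: "eigenvalue H l" and l_simple: "Polynomial.order l (char_poly H) = 1"
    using simple unfolding least_eigenvalue_simple_def by blast
  have k1: "1 \<le> k" using k by simp
  have P: "P = rank_one_certificate n H k"
    unfolding P_def by (simp add: fun_eq_iff rank_one_certificate_def)
  show ?thesis
    unfolding P
    using rank_one_certificate_spectrum[OF H k1] card_eigenvalues_if_rank_one_certificate[OF H k1]
      rank_one_certificate_exists[OF H sym _ k1 l l_simple] by blast
qed

end
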